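(* Let $l\ge 2$ be an integer, $m=l^3-(l-2)^3$, and let $S_l$ be the set defined below. Then $S_l$ tiles $\mathbb{Z}^3$ by $(3m+6)\mathbb{Z}^3$, and whenever $S_l$ tiles $\mathbb{Z}^3$ by some $W$, $W$ is a translate of $(3m+6)\mathbb{Z}^3$.
   Context: Write $C_r=\{0,1,\dots,r-1\}^3$. Define $f:\{0,\dots,m+1\}^3\to\{1,\dots,m\}$ by: $f(x,y,z)=y$ if $0\le x\le m$, $1\le y\le m$, $z=0$; $f=x$ if $1\le x\le m$, $0\le y\le m$, $z=m+1$; $f=y$ if $x=0$, $1\le y\le m$, $1\le z\le m$; $f=x$ if $1\le x\le m$, $y=0$, $1\le z\le m$; $f=z$ if $1\le x\le m+1$, $1\le y\le m+1$, $1\le z\le m$; and $f=1$ at all remaining points. Let $Q_i=\{p\in\{0,\dots,m+1\}^3 : f(p)=i\}$. Set $Q_i'=3Q_i\oplus C_3$ for $2\le i\le m$, and $Q_1'=\big((3Q_1\oplus C_3)\cup\{(-1,1,1),(1,-1,1),(1,1,-1)\}\big)\setminus\{(3m+5,1,1),(1,3m+5,1),(1,1,3m+5)\}$ (here $cA=\{ca: a\in A\}$ and $A\oplus B=\{a+b: a\in A, b\in B\}$). Let $x_1,\dots,x_m$ be an enumeration of $C_l\setminus(C_{l-2}+(1,1,1))$ and $S_l=\bigcup_{i=1}^m\big(Q_i'+(3m+6)x_i\big)$. A set $P$ tiles $E$ by $W$ if $W\oplus P$ is non-overlapping (each sum arises from a unique pair) and $W\oplus P=E$. *)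

theory Defs
  imports Main
begin

type_synonym pt = "int \<times> int \<times> int"

definition padd :: "pt \<Rightarrow> pt \<Rightarrow> pt" where
  "padd p q = (case p of (a,b,c) \<Rightarrow> case q of (d,e,f) \<Rightarrow> (a+d, b+e, c+f))"

definition psmul :: "int \<Rightarrow> pt \<Rightarrow> pt" where
  "psmul k p = (case p of (a,b,c) \<Rightarrow> (k*a, k*b, k*c))"

definition msum :: "pt set \<Rightarrow> pt set \<Rightarrow> pt set" where
  "msum A B = {padd a b | a b. a \<in> A \<and> b \<in> B}"

definition dil :: "int \<Rightarrow> pt set \<Rightarrow> pt set" where
  "dil k A = psmul k ` A"

definition transl :: "pt set \<Rightarrow> pt \<Rightarrow> pt set" where
  "transl A t = (\<lambda>a. padd a t) ` A"

definition cube :: "int \<Rightarrow> pt set" where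
  "cube r = {(a,b,c). 0 \<le> a \<and> a < r \<and> 0 \<le> b \<and> b < r \<and> 0 \<le> c \<and> c < r}"

definition box :: "int \<Rightarrow> pt set" where
  "box m = {(x,y,z). 0 \<le> x \<and> x \<le> m+1 \<and> 0 \<le> y \<and> y \<le> m+1 \<and> 0 \<le> z \<and> z \<le> m+1}"

text \<open>The colouring f : {0..m+1}^3 -> {1..m} (the listed regions are pairwise disjoint).\<close>
definition fcol :: "int \<Rightarrow> pt \<Rightarrow> int" where
  "fcol m p = (case p of (x,y,z) \<Rightarrow>
     if 0 \<le> x \<and> x \<le> m \<and> 1 \<le> y \<and> y \<le> m \<and> z = 0 then y
     else if 1 \<le> x \<and> x \<le> m \<and> 0 \<le> y \<and> y \<le> m \<and> z = m+1 then x
     else if x = 0 \<and> 1 \<le> y \<and> y \<le> m \<and> 1 \<le> z \<and> z \<le> m then y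
     else if 1 \<le> x \<and> x \<le> m \<and> y = 0 \<and> 1 \<le> z \<and> z \<le> m then x
     else if 1 \<le> x \<and> x \<le> m+1 \<and> 1 \<le> y \<and> y \<le> m+1 \<and> 1 \<le> z \<and> z \<le> m then z
     else 1)"

definition Qset :: "int \<Rightarrow> int \<Rightarrow> pt set" where
  "Qset m i = {p \<in> box m. fcol m p = i}"

definition Qprime :: "int \<Rightarrow> int \<Rightarrow> pt set" where
  "Qprime m i = (if i = 1 then
      (msum (dil 3 (Qset m 1)) (cube 3) \<union> {(-1,1,1), (1,-1,1), (1,1,-1)})
        - {(3*m+5,1,1), (1,3*m+5,1), (1,1,3*m+5)}
    else msum (dil 3 (Qset m i)) (cube 3))"

definition Sset :: "int \<Rightarrow> (int \<Rightarrow> pt) \<Rightarrow> pt set" where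
  "Sset m x = (\<Union>i\<in>{1..m}. transl (Qprime m i) (psmul (3*m+6) (x i)))"

definition tiles :: "pt set \<Rightarrow> pt set \<Rightarrow> pt set \<Rightarrow> bool" where
  "tiles P E W \<longleftrightarrow>
     (\<forall>w1\<in>W. \<forall>w2\<in>W. \<forall>p1\<in>P. \<forall>p2\<in>P. padd w1 p1 = padd w2 p2 \<longrightarrow> w1 = w2 \<and> p1 = p2)
     \<and> msum W P = E"

end

theory Submission
  imports Defs "HOL-Library.Product_Plus" "HOL-Library.Product_Order"
begin

text \<open>Write \<open>N = 3m + 6\<close>. The blocks \<open>3Q\<^sub>i \<oplus> C\<^sub>3\<close> partition the cube \<open>C\<^sub>N\<close>, the three corners
  removed from \<open>Q'\<^sub>1\<close> are congruent modulo \<open>N\<close> to the three bumps added to it, and translating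
  \<open>Q'\<^sub>i\<close> by \<open>N x\<^sub>i\<close> does not change residues. So \<open>S\<^sub>l\<close> contains exactly one point of every residue
  class modulo \<open>N\<close>, which is the same as tiling \<open>\<int>\<^sup>3\<close> by \<open>N\<int>\<^sup>3\<close>.

  Conversely, let \<open>W \<oplus> S\<^sub>l = \<int>\<^sup>3\<close> and \<open>w \<in> W\<close>. The point \<open>c = w + (3m+5,1,1) + N x\<^sub>1\<close> is missing
  from \<open>w + S\<^sub>l\<close>, while its five neighbours other than \<open>c + e\<^sub>1\<close> belong to it. Hence the translate
  \<open>v + S\<^sub>l\<close> covering \<open>c\<close> contains none of them, so \<open>c - v\<close> is a point of \<open>S\<^sub>l\<close> without neighbours
  in those five directions. Every point of a block has neighbours in its block along every axis,
  so \<open>c - v\<close> must be the bump \<open>(-1,1,1) + N x\<^sub>1\<close>, i.e. \<open>v = w + N e\<^sub>1\<close>. Thus \<open>W\<close> is closed under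
  adding \<open>N e\<^sub>1\<close>, \<open>N e\<^sub>2\<close>, \<open>N e\<^sub>3\<close>, and a set with this property that tiles together with a complete
  residue system is a single coset of \<open>N\<int>\<^sup>3\<close>.\<close>

lemma padd_eq_plus [simp]: "padd p q = p + q"
  by (cases p; cases q) (simp add: padd_def)

lemma psmul_Pair [simp]: "psmul k (a, b, c) = (k * a, k * b, k * c)"
  by (simp add: psmul_def)

lemma psmul_diff: "psmul k (p - q) = psmul k p - psmul k q"
  by (cases p; cases q) (simp add: algebra_simps)

lemma mem_transl: "p \<in> transl A t \<longleftrightarrow> p - t \<in> A"
  by (force simp: transl_def)

lemma mem_dil_UNIV: "p \<in> dil k UNIV \<longleftrightarrow> (\<exists>u. p = psmul k u)"
  by (simp add: dil_def image_iff)

lemma msum_eq: "msum A B = {a + b | a b. a \<in> A \<and> b \<in> B}"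
  by (simp add: msum_def)

definition ptmod :: "int \<Rightarrow> pt \<Rightarrow> pt" where
  "ptmod k p = (case p of (a, b, c) \<Rightarrow> (a mod k, b mod k, c mod k))"

definition ptdiv :: "int \<Rightarrow> pt \<Rightarrow> pt" where
  "ptdiv k p = (case p of (a, b, c) \<Rightarrow> (a div k, b div k, c div k))"

lemma ptmod_Pair [simp]: "ptmod k (a, b, c) = (a mod k, b mod k, c mod k)"
  by (simp add: ptmod_def)

lemma ptdiv_Pair [simp]: "ptdiv k (a, b, c) = (a div k, b div k, c div k)"
  by (simp add: ptdiv_def)

lemma ptmod_eq_iff: "ptmod k p = ptmod k q \<longleftrightarrow> p - q \<in> dil k UNIV"
proof (cases p; cases q)
  fix a b c a' b' c' assume pq: "p = (a, b, c)" "q = (a', b', c')"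
  have "ptmod k p = ptmod k q \<longleftrightarrow> k dvd a - a' \<and> k dvd b - b' \<and> k dvd c - c'"
    by (simp add: pq mod_eq_dvd_iff)
  also have "\<dots> \<longleftrightarrow> p - q \<in> dil k UNIV"
    by (auto simp: pq mem_dil_UNIV dvd_def)
  finally show ?thesis .
qed

lemma ptmod_add_psmul [simp]: "ptmod k (p + psmul k u) = ptmod k p"
  by (cases p; cases u) simp

lemma ptmod_cube: "p \<in> cube k \<Longrightarrow> ptmod k p = p"
  by (auto simp: cube_def)

lemma ptmod_in_cube: "k > 0 \<Longrightarrow> ptmod k p \<in> cube k"
  by (cases p) (simp add: cube_def)

lemma mem_msum_dil_cube:
  assumes "k > 0"
  shows "p \<in> msum (dil k A) (cube k) \<longleftrightarrow> ptdiv k p \<in> A"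
proof
  assume "p \<in> msum (dil k A) (cube k)"
  then obtain a r where "a \<in> A" "r \<in> cube k" "p = psmul k a + r"
    by (auto simp: msum_eq dil_def)
  then show "ptdiv k p \<in> A"
    by (cases a; cases r) (auto simp: cube_def)
next
  assume "ptdiv k p \<in> A"
  moreover have "p = psmul k (ptdiv k p) + ptmod k p"
    by (cases p) simp
  ultimately show "p \<in> msum (dil k A) (cube k)"
    unfolding msum_eq dil_def using ptmod_in_cube[OF assms] by blast
qed

section \<open>Complete residue systems\<close>

definition residue_system :: "int \<Rightarrow> pt set \<Rightarrow> bool" where
  "residue_system k T \<longleftrightarrow> (\<forall>p. \<exists>!t \<in> T. ptmod k t = ptmod k p)"

lemma residue_system_iff:
  "residue_system k T \<longleftrightarrow> (\<forall>p. \<exists>t \<in> T. ptmod k t = ptmod k p) \<and> inj_on (ptmod k) T"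
  unfolding residue_system_def inj_on_def by metis

lemma residue_system_ex: "residue_system k T \<Longrightarrow> \<exists>t \<in> T. ptmod k t = ptmod k p"
  unfolding residue_system_def by blast

lemma residue_system_unique:
  "residue_system k T \<Longrightarrow> t \<in> T \<Longrightarrow> t' \<in> T \<Longrightarrow> ptmod k t = ptmod k t' \<Longrightarrow> t = t'"
  unfolding residue_system_iff by (blast dest: inj_onD)

lemma residue_system_translate_notin:
  assumes "residue_system k T" "t \<in> T" "psmul k u \<noteq> 0"
  shows "t + psmul k u \<notin> T"
proof
  assume "t + psmul k u \<in> T"
  then have "t + psmul k u = t"
    by (rule residue_system_unique[OF assms(1) _ assms(2)]) simp
  with assms(3) show False
    by simp
qed

lemma residue_system_cube: "k > 0 \<Longrightarrow> residue_system k (cube k)"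
  unfolding residue_system_iff inj_on_def by (metis ptmod_cube ptmod_in_cube)

lemma residue_system_image:
  assumes "residue_system k T" and "\<And>t. t \<in> T \<Longrightarrow> ptmod k (\<phi> t) = ptmod k t"
  shows "residue_system k (\<phi> ` T)"
  using assms unfolding residue_system_iff inj_on_def by auto

lemma residue_system_exchange:
  assumes T: "residue_system k T" and "A \<subseteq> T"
    and B: "ptmod k ` B = ptmod k ` A" "inj_on (ptmod k) B"
  shows "residue_system k (T - A \<union> B)"
  unfolding residue_system_iff
proof
  show "\<forall>p. \<exists>s \<in> T - A \<union> B. ptmod k s = ptmod k p"
    using T B(1) unfolding residue_system_iff by (metis DiffI UnI1 UnI2 imageE imageI)
  have "ptmod k ` (T - A) \<inter> ptmod k ` B = {}"
    using T \<open>A \<subseteq> T\<close> unfolding B(1) residue_system_iff inj_on_def by blast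
  moreover have "inj_on (ptmod k) (T - A)"
    using T unfolding residue_system_iff by (blast intro: inj_on_subset)
  ultimately show "inj_on (ptmod k) (T - A \<union> B)"
    unfolding inj_on_Un using B(2) by blast
qed

section \<open>Tilings by a complete residue system\<close>

lemma tiles_iff:
  "tiles S UNIV W \<longleftrightarrow>
     (\<forall>w1\<in>W. \<forall>w2\<in>W. \<forall>s1\<in>S. \<forall>s2\<in>S. w1 + s1 = w2 + s2 \<longrightarrow> w1 = w2 \<and> s1 = s2)
     \<and> (\<forall>p. \<exists>w\<in>W. \<exists>s\<in>S. p = w + s)"
  unfolding tiles_def msum_eq padd_eq_plus set_eq_iff by blast

lemma tiles_unique:
  "tiles S UNIV W \<Longrightarrow> w1 \<in> W \<Longrightarrow> w2 \<in> W \<Longrightarrow> s1 \<in> S \<Longrightarrow> s2 \<in> S \<Longrightarrow> w1 + s1 = w2 + s2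
    \<Longrightarrow> w1 = w2 \<and> s1 = s2"
  unfolding tiles_iff by blast

lemma tiles_cover: "tiles S UNIV W \<Longrightarrow> \<exists>w\<in>W. \<exists>s\<in>S. p = w + s"
  unfolding tiles_iff by blast

lemma residue_system_tiles_lattice:
  assumes S: "residue_system k S"
  shows "tiles S UNIV (dil k UNIV)"
  unfolding tiles_iff
proof (rule conjI; intro ballI allI impI)
  fix w1 w2 s1 s2
  assume "w1 \<in> dil k UNIV" "w2 \<in> dil k UNIV" "s1 \<in> S" "s2 \<in> S" and eq: "w1 + s1 = w2 + s2"
  then obtain u1 u2 where "w1 = psmul k u1" "w2 = psmul k u2"
    unfolding mem_dil_UNIV by blast
  with eq have "s1 = s2 + psmul k (u2 - u1)"
    by (simp add: psmul_diff algebra_simps)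
  then have "s1 = s2"
    using residue_system_unique[OF S \<open>s1 \<in> S\<close> \<open>s2 \<in> S\<close>] by simp
  with eq show "w1 = w2 \<and> s1 = s2" by simp
next
  fix p
  obtain s where s: "s \<in> S" "ptmod k s = ptmod k p"
    using residue_system_ex[OF S] by blast
  then have "p - s \<in> dil k UNIV"
    by (metis ptmod_eq_iff)
  with s show "\<exists>w\<in>dil k UNIV. \<exists>s\<in>S. p = w + s"
    by (metis diff_add_cancel)
qed

lemma tiles_translate_closed:
  assumes T: "tiles S UNIV W" and "w \<in> W" "b \<in> S" "c \<notin> S"
    and c_nbrs: "\<And>u. u \<in> U \<Longrightarrow> c + u \<in> S"
    and b_unique: "\<And>t. t \<in> S \<Longrightarrow> (\<And>u. u \<in> U \<Longrightarrow> t + u \<notin> S) \<Longrightarrow> t = b"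
  shows "w + (c - b) \<in> W"
proof -
  obtain v t where v: "v \<in> W" and t: "t \<in> S" and vt: "w + c = v + t"
    using tiles_cover[OF T] by blast
  have "v \<noteq> w"
    using vt t \<open>c \<notin> S\<close> by (metis add_left_cancel)
  \<comment> \<open>the \<open>U\<close>-neighbours of \<open>w + c\<close> are already covered by \<open>w + S\<close>\<close>
  have "t + u \<notin> S" if "u \<in> U" for u
  proof
    assume "t + u \<in> S"
    have "v + (t + u) = w + (c + u)"
      using vt by (simp add: algebra_simps)
    then show False
      using tiles_unique[OF T v \<open>w \<in> W\<close> \<open>t + u \<in> S\<close> c_nbrs[OF that]] \<open>v \<noteq> w\<close> by simp
  qed
  then have "t = b"
    using b_unique[OF t] by blast
  then have "v = w + (c - b)"
    using vt by (simp add: add_diff_eq eq_diff_eq)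
  then show ?thesis
    using v by simp
qed

lemma ex_nonneg_diff: "\<exists>v w. (0::pt) \<le> v \<and> 0 \<le> w \<and> u = v - w"
proof -
  obtain a b c where "u = (a, b, c)"
    by (cases u) auto
  then show ?thesis
    by (rule_tac exI[of _ "(\<bar>a\<bar> + a, \<bar>b\<bar> + b, \<bar>c\<bar> + c)"], rule_tac exI[of _ "(\<bar>a\<bar>, \<bar>b\<bar>, \<bar>c\<bar>)"])
      (simp add: zero_prod_def abs_if)
qed

lemma tiles_mem_congruent:
  assumes S: "residue_system k S" and T: "tiles S UNIV W" and "a \<in> W" "c \<in> W"
    and closed: "\<And>w u. w \<in> W \<Longrightarrow> 0 \<le> u \<Longrightarrow> w + psmul k u \<in> W"
  shows "c - a \<in> dil k UNIV"
proof -
  obtain b where "b \<in> S"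
    using residue_system_ex[OF S] by blast
  obtain s where "s \<in> S" and "ptmod k s = ptmod k (c + b - a)"
    using residue_system_ex[OF S] by blast
  then obtain u where u: "c + b - a - s = psmul k u"
    by (metis mem_dil_UNIV ptmod_eq_iff)
  obtain v w where "0 \<le> v" "0 \<le> w" "u = v - w"
    using ex_nonneg_diff by blast
  then have "a + psmul k v \<in> W" "c + psmul k w \<in> W"
    using closed \<open>a \<in> W\<close> \<open>c \<in> W\<close> by auto
  moreover have "(a + psmul k v) + s = (c + psmul k w) + b"
    using u \<open>u = v - w\<close> by (simp add: psmul_diff algebra_simps)
  ultimately have "a + psmul k v = c + psmul k w"
    using tiles_unique[OF T] \<open>s \<in> S\<close> \<open>b \<in> S\<close> by blast
  then have "c - a = psmul k v - psmul k w"
    by (simp add: algebra_simps)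
  then have "c - a = psmul k u"
    using \<open>u = v - w\<close> by (simp add: psmul_diff)
  then show ?thesis
    unfolding mem_dil_UNIV by blast
qed

lemma tiles_eq_lattice_coset:
  assumes S: "residue_system k S" and T: "tiles S UNIV W" and "a \<in> W"
    and closed: "\<And>w u. w \<in> W \<Longrightarrow> 0 \<le> u \<Longrightarrow> w + psmul k u \<in> W"
  shows "W = transl (dil k UNIV) a"
proof -
  have covered: "c \<in> W" if ca: "c - a \<in> dil k UNIV" for c
  proof -
    obtain b where "b \<in> S"
      using residue_system_ex[OF S] by blast
    obtain w s where "w \<in> W" "s \<in> S" and ws: "c + b = w + s"
      using tiles_cover[OF T] by blast
    obtain u u' where "c - a = psmul k u" "w - a = psmul k u'"
      using ca tiles_mem_congruent[OF S T \<open>a \<in> W\<close> \<open>w \<in> W\<close> closed] unfolding mem_dil_UNIV by blast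
    then have "s = b + psmul k (u - u')"
      using ws by (simp add: psmul_diff algebra_simps)
    then have "s = b"
      using residue_system_unique[OF S \<open>s \<in> S\<close> \<open>b \<in> S\<close>] by simp
    then show ?thesis
      using ws \<open>w \<in> W\<close> by simp
  qed
  moreover have "c - a \<in> dil k UNIV" if "c \<in> W" for c
    using tiles_mem_congruent[OF S T \<open>a \<in> W\<close> that closed] .
  ultimately show ?thesis
    by (auto simp: mem_transl)
qed

definition axes :: "pt set" where
  "axes = {(1, 0, 0), (0, 1, 0), (0, 0, 1)}"

definition unit_steps :: "pt set" where
  "unit_steps = axes \<union> uminus ` axes"

lemma closed_under_nonneg_multiples:
  assumes step: "\<And>w e. w \<in> W \<Longrightarrow> e \<in> axes \<Longrightarrow> w + psmul k e \<in> W"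
    and "w \<in> W" "0 \<le> u"
  shows "w + psmul k u \<in> W"
proof -
  have iterate: "w + psmul k (psmul n e) \<in> W" if "w \<in> W" "e \<in> axes" "0 \<le> n" for w e n
  proof -
    have "w + psmul k (psmul (int j) e) \<in> W" for j
    proof (induction j)
      case 0
      then show ?case using \<open>w \<in> W\<close> by (cases e; cases w) simp
    next
      case (Suc j)
      have "w + psmul k (psmul (int (Suc j)) e) = w + psmul k (psmul (int j) e) + psmul k e"
        by (cases e) (simp add: algebra_simps)
      then show ?case using step[OF Suc \<open>e \<in> axes\<close>] by (simp add: add.assoc)
    qed
    then show ?thesis
      using \<open>0 \<le> n\<close> by (metis nonneg_int_cases)
  qed
  obtain a b c where u: "u = (a, b, c)" and "0 \<le> a" "0 \<le> b" "0 \<le> c"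
    using \<open>0 \<le> u\<close> by (cases u) (simp add: zero_prod_def)
  have "w + psmul k u
      = w + psmul k (psmul a (1, 0, 0)) + psmul k (psmul b (0, 1, 0)) + psmul k (psmul c (0, 0, 1))"
    using u by (cases w) simp
  also have "\<dots> \<in> W"
    using \<open>0 \<le> a\<close> \<open>0 \<le> b\<close> \<open>0 \<le> c\<close> by (intro iterate \<open>w \<in> W\<close>) (simp_all add: axes_def)
  finally show ?thesis .
qed

section \<open>The set \<open>S\<^sub>l\<close>\<close>

text \<open>The points \<open>bump e\<close> are the three points added to \<open>Q'\<^sub>1\<close>, the points \<open>notch m e\<close> the three
  corners removed from it, and \<open>fundamental m\<close> is the union of all \<open>Q'\<^sub>i\<close> before translation.\<close>

definition bump :: "pt \<Rightarrow> pt" where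
  "bump e = (1, 1, 1) - psmul 2 e"

definition notch :: "int \<Rightarrow> pt \<Rightarrow> pt" where
  "notch m e = bump e + psmul (3 * m + 6) e"

definition colour :: "int \<Rightarrow> pt \<Rightarrow> int" where
  "colour m q = fcol m (ptdiv 3 q)"

definition fundamental :: "int \<Rightarrow> pt set" where
  "fundamental m = cube (3 * m + 6) - notch m ` axes \<union> bump ` axes"

lemma bumps_eq: "bump ` axes = {(-1, 1, 1), (1, -1, 1), (1, 1, -1)}"
  by (simp add: axes_def bump_def)

lemma notches_eq: "notch m ` axes = {(3 * m + 5, 1, 1), (1, 3 * m + 5, 1), (1, 1, 3 * m + 5)}"
  by (simp add: axes_def notch_def bump_def add.commute)

lemma mem_cube_iff_ptdiv: "q \<in> cube (3 * m + 6) \<longleftrightarrow> ptdiv 3 q \<in> box m"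
  by (cases q) (auto simp: cube_def box_def)

lemma colour_bump: "e \<in> axes \<Longrightarrow> colour m (bump e) = 1"
  by (auto simp: axes_def bump_def colour_def fcol_def)

lemma colour_notch: "m \<ge> 0 \<Longrightarrow> e \<in> axes \<Longrightarrow> colour m (notch m e) = 1"
  by (auto simp: axes_def notch_def bump_def colour_def fcol_def)

lemma bump_notin_cube: "e \<in> axes \<Longrightarrow> bump e \<notin> cube k"
  by (auto simp: axes_def bump_def cube_def)

lemma notch_in_cube: "m \<ge> 0 \<Longrightarrow> e \<in> axes \<Longrightarrow> notch m e \<in> cube (3 * m + 6)"
  by (auto simp: axes_def notch_def bump_def cube_def)

lemma bump_ne_notch: "m \<ge> 0 \<Longrightarrow> e \<in> axes \<Longrightarrow> e' \<in> axes \<Longrightarrow> bump e \<noteq> notch m e'"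
  using bump_notin_cube notch_in_cube by metis

lemma Qprime_eq:
  assumes "m \<ge> 0"
  shows "Qprime m i = {q \<in> fundamental m. colour m q = i}"
proof -
  have blowup: "msum (dil 3 (Qset m i)) (cube 3) = {q \<in> cube (3 * m + 6). colour m q = i}" for i
    by (auto simp: mem_msum_dil_cube Qset_def colour_def mem_cube_iff_ptdiv)
  show ?thesis
    unfolding Qprime_def blowup fundamental_def bumps_eq[symmetric] notches_eq[symmetric]
    using colour_bump colour_notch[OF assms] bump_ne_notch[OF assms] by auto
qed

lemma colour_range: "m \<ge> 1 \<Longrightarrow> q \<in> fundamental m \<Longrightarrow> colour m q \<in> {1..m}"
  by (auto simp: fundamental_def colour_bump mem_cube_iff_ptdiv colour_def fcol_def box_def
      split: prod.splits)

lemma Sset_eq_image: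
  assumes "m \<ge> 1"
  shows "Sset m x = (\<lambda>q. q + psmul (3 * m + 6) (x (colour m q))) ` fundamental m"
proof -
  have "Sset m x =
      (\<Union>i\<in>{1..m}. (\<lambda>q. q + psmul (3 * m + 6) (x i)) ` {q \<in> fundamental m. colour m q = i})"
    using assms by (simp add: Sset_def transl_def Qprime_eq)
  also have "\<dots> = (\<lambda>q. q + psmul (3 * m + 6) (x (colour m q))) ` fundamental m"
    using colour_range[OF assms] by blast
  finally show ?thesis .
qed

lemma ptmod_bump:
  assumes "m \<ge> 0" "e \<in> axes"
  shows "ptmod (3 * m + 6) (bump e) = notch m e"
proof -
  have "ptmod (3 * m + 6) (bump e) = ptmod (3 * m + 6) (notch m e)"
    by (metis notch_def ptmod_add_psmul)
  then show ?thesis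
    using ptmod_cube[OF notch_in_cube[OF assms]] by simp
qed

lemma residue_system_fundamental:
  assumes "m \<ge> 0"
  shows "residue_system (3 * m + 6) (fundamental m)"
  unfolding fundamental_def
proof (rule residue_system_exchange)
  show "residue_system (3 * m + 6) (cube (3 * m + 6))"
    using assms by (intro residue_system_cube) simp
  show "notch m ` axes \<subseteq> cube (3 * m + 6)"
    using notch_in_cube[OF assms] by blast
  show "ptmod (3 * m + 6) ` bump ` axes = ptmod (3 * m + 6) ` notch m ` axes"
    using ptmod_bump[OF assms] ptmod_cube[OF notch_in_cube[OF assms]] by (simp add: image_image)
  show "inj_on (ptmod (3 * m + 6)) (bump ` axes)"
    using assms by (auto simp: inj_on_def ptmod_bump) (auto simp: axes_def notch_def bump_def)
qed

lemma residue_system_Sset: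
  assumes "m \<ge> 1"
  shows "residue_system (3 * m + 6) (Sset m x)"
  unfolding Sset_eq_image[OF assms]
  using assms by (intro residue_system_image residue_system_fundamental) simp_all

lemma other_axes:
  assumes "e \<in> axes"
  obtains e1 e2 where "e1 \<in> axes" "e2 \<in> axes" "e1 \<noteq> e" "e2 \<noteq> e" "e1 \<noteq> e2"
  using assms unfolding axes_def
  by (elim insertE emptyE)
    (simp_all add: that[of "(0, 1, 0)" "(0, 0, 1)"] that[of "(1, 0, 0)" "(0, 0, 1)"]
      that[of "(1, 0, 0)" "(0, 1, 0)"] axes_def)

lemma ex_unit_step_same_block:
  assumes "e \<in> axes"
  shows "\<exists>u \<in> {e, -e}. ptdiv 3 (q + u) = ptdiv 3 q"
proof -
  have "(a + 1) div 3 = a div 3 \<or> (a - 1) div 3 = a div 3" for a :: int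
    by presburger
  then show ?thesis
    using assms by (cases q) (auto simp: axes_def)
qed

lemma notch_plus_unit_step_cancel:
  assumes "m \<ge> 0" "a \<in> axes" "b \<in> axes" "u1 \<in> unit_steps" "u2 \<in> unit_steps"
    and "notch m a + u2 = notch m b + u1"
  shows "u1 = u2"
  using assms unfolding axes_def unit_steps_def notch_def bump_def
  by (simp; elim disjE; simp)

lemma ex_unit_step_same_colour:
  assumes "m \<ge> 0" "q \<in> cube (3 * m + 6) - notch m ` axes" "e \<in> axes"
  shows "\<exists>u \<in> unit_steps - {e}. q + u \<in> cube (3 * m + 6) - notch m ` axes
    \<and> colour m (q + u) = colour m q"
proof -
  obtain e1 e2 where e12: "e1 \<in> axes" "e2 \<in> axes" "e1 \<noteq> e" "e2 \<noteq> e" "e1 \<noteq> e2"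
    using other_axes[OF \<open>e \<in> axes\<close>] .
  obtain u1 u2 where u12: "u1 \<in> {e1, -e1}" "u2 \<in> {e2, -e2}"
    and block: "ptdiv 3 (q + u1) = ptdiv 3 q" "ptdiv 3 (q + u2) = ptdiv 3 q"
    using ex_unit_step_same_block e12 by metis
  have steps: "u1 \<in> unit_steps - {e}" "u2 \<in> unit_steps - {e}" "u1 \<noteq> u2"
    using e12 u12 \<open>e \<in> axes\<close> by (auto simp: unit_steps_def axes_def)
  have in_cube: "q + u1 \<in> cube (3 * m + 6)" "q + u2 \<in> cube (3 * m + 6)"
    using assms(2) block by (simp_all add: mem_cube_iff_ptdiv)
  have "q + u1 \<notin> notch m ` axes \<or> q + u2 \<notin> notch m ` axes"
  proof (rule ccontr)
    assume "\<not> ?thesis"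
    then obtain a b where "a \<in> axes" "b \<in> axes" "q + u1 = notch m a" "q + u2 = notch m b"
      by blast
    then have "notch m a + u2 = notch m b + u1"
      by (metis add.commute add.left_commute)
    then show False
      using notch_plus_unit_step_cancel[OF \<open>m \<ge> 0\<close> \<open>a \<in> axes\<close> \<open>b \<in> axes\<close>] steps by blast
  qed
  then show ?thesis
    using steps in_cube block by (auto simp: colour_def)
qed

lemma bump_plus_axis:
  assumes "m \<ge> 0" "e \<in> axes"
  shows "bump e + e \<in> fundamental m \<and> colour m (bump e + e) = 1"
  using assms
  by (auto simp: axes_def bump_def notch_def fundamental_def cube_def colour_def fcol_def)

lemma notch_plus_unit_step:
  assumes "m \<ge> 0" "e \<in> axes" "u \<in> unit_steps - {e}"
  shows "notch m e + u \<in> fundamental m \<and> colour m (notch m e + u) = 1"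
proof -
  have "(3 * m + 4) div 3 = m + 1" "(3 * m + 5) div 3 = m + 1" "(5 + 3 * m) div 3 = m + 1"
    by presburger+
  then show ?thesis
    using assms by (auto simp: axes_def unit_steps_def bump_def notch_def fundamental_def cube_def
        colour_def fcol_def)
qed

lemma Sset_memI:
  assumes "m \<ge> 1" "q \<in> fundamental m" "colour m q = i"
  shows "q + psmul (3 * m + 6) (x i) \<in> Sset m x"
  using assms by (auto simp: Sset_eq_image)

lemma Sset_isolated_point:
  assumes "m \<ge> 1" "e \<in> axes" "t \<in> Sset m x"
    and isolated: "\<And>u. u \<in> unit_steps - {e} \<Longrightarrow> t + u \<notin> Sset m x"
  shows "t = bump e + psmul (3 * m + 6) (x 1)"
proof -
  obtain q where q: "q \<in> fundamental m" and t: "t = q + psmul (3 * m + 6) (x (colour m q))"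
    using \<open>t \<in> Sset m x\<close> Sset_eq_image[OF \<open>m \<ge> 1\<close>] by blast
  have "t + u = (q + u) + psmul (3 * m + 6) (x (colour m q))" for u
    using t by (simp add: algebra_simps)
  then have no_step:
    "\<not> (u \<in> unit_steps - {e} \<and> q + u \<in> fundamental m \<and> colour m (q + u) = colour m q)" for u
    using isolated Sset_memI[OF \<open>m \<ge> 1\<close>] by metis
  show ?thesis
  proof (cases "q \<in> bump ` axes")
    case True
    then obtain e' where "e' \<in> axes" "q = bump e'"
      by blast
    moreover have "e' = e"
      using no_step[of e'] bump_plus_axis[of m e'] colour_bump \<open>m \<ge> 1\<close> calculation
      by (auto simp: unit_steps_def)
    ultimately show ?thesis
      using t colour_bump by simp
  next
    case False
    then have "q \<in> cube (3 * m + 6) - notch m ` axes"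
      using q by (simp add: fundamental_def)
    then show ?thesis
      using ex_unit_step_same_colour[of m q e] no_step \<open>m \<ge> 1\<close> \<open>e \<in> axes\<close>
      by (auto simp: fundamental_def)
  qed
qed

lemma bump_in_Sset: "m \<ge> 1 \<Longrightarrow> e \<in> axes \<Longrightarrow> bump e + psmul (3 * m + 6) (x 1) \<in> Sset m x"
  by (intro Sset_memI colour_bump) (auto simp: fundamental_def)

lemma notch_notin_Sset:
  assumes "m \<ge> 1" "e \<in> axes"
  shows "notch m e + psmul (3 * m + 6) (x 1) \<notin> Sset m x"
proof -
  have "psmul (3 * m + 6) e \<noteq> 0"
    using assms by (auto simp: axes_def zero_prod_def)
  moreover have "notch m e + psmul (3 * m + 6) (x 1)
      = bump e + psmul (3 * m + 6) (x 1) + psmul (3 * m + 6) e"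
    by (simp add: notch_def algebra_simps)
  ultimately show ?thesis
    using residue_system_translate_notin[OF residue_system_Sset bump_in_Sset] assms by metis
qed

lemma Sset_tiling_translate_closed:
  assumes "m \<ge> 1" and T: "tiles (Sset m x) UNIV W" and "w \<in> W" "e \<in> axes"
  shows "w + psmul (3 * m + 6) e \<in> W"
proof -
  let ?y = "psmul (3 * m + 6) (x 1)"
  have "notch m e + ?y + u \<in> Sset m x" if "u \<in> unit_steps - {e}" for u
  proof -
    have "(notch m e + u) + ?y \<in> Sset m x"
      using notch_plus_unit_step \<open>m \<ge> 1\<close> \<open>e \<in> axes\<close> that by (intro Sset_memI) auto
    then show ?thesis
      by (simp add: algebra_simps)
  qed
  then have "w + ((notch m e + ?y) - (bump e + ?y)) \<in> W"
    using tiles_translate_closed[OF T \<open>w \<in> W\<close> bump_in_Sset[OF \<open>m \<ge> 1\<close> \<open>e \<in> axes\<close>]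
        notch_notin_Sset[OF \<open>m \<ge> 1\<close> \<open>e \<in> axes\<close>], of "unit_steps - {e}"]
      Sset_isolated_point[OF \<open>m \<ge> 1\<close> \<open>e \<in> axes\<close>] by blast
  then show ?thesis
    by (simp add: notch_def)
qed

theorem lemma2p4:
  fixes l m :: int and x :: "int \<Rightarrow> pt"
  assumes "l \<ge> 2"
    and "m = l^3 - (l-2)^3"
    and "bij_betw x {1..m} (cube l - transl (cube (l-2)) (1,1,1))"
  shows "tiles (Sset m x) UNIV (dil (3*m+6) UNIV)
       \<and> (\<forall>W. tiles (Sset m x) UNIV W \<longrightarrow> (\<exists>t. W = transl (dil (3*m+6) UNIV) t))"
proof -
  have "m = 6 * (l - 1)^2 + 2"
    unfolding assms(2) by (simp add: power2_eq_square power3_eq_cube algebra_simps)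
  then have "m \<ge> 1"
    using zero_le_power2[of "l - 1"] by linarith
  note S = residue_system_Sset[OF this, of x]
  show ?thesis
  proof (intro conjI allI impI)
    show "tiles (Sset m x) UNIV (dil (3 * m + 6) UNIV)"
      using residue_system_tiles_lattice[OF S] .
  next
    fix W assume T: "tiles (Sset m x) UNIV W"
    then obtain a where "a \<in> W"
      unfolding tiles_iff by blast
    moreover have "w + psmul (3 * m + 6) u \<in> W" if "w \<in> W" "0 \<le> u" for w u
      using closed_under_nonneg_multiples Sset_tiling_translate_closed[OF \<open>m \<ge> 1\<close> T] that
      by blast
    ultimately show "\<exists>t. W = transl (dil (3 * m + 6) UNIV) t"
      using tiles_eq_lattice_coset[OF S T] by blast
  qed
qed

end
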